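(* For each positive integer $k$, the graph $K_{k+1,\lceil k^2/4+500k^{7/4}\rceil}$ cannot be $k$-page embedded.
   Context: A book with $k$ pages consists of a line (the spine) and $k$ half-planes (the pages) whose common boundary is the spine. A $k$-page embedding of a graph places all vertices on the spine and draws each edge inside a single page with no two edges crossing. *)

theory Defs
  imports Complex_Main
begin

text \<open>A k-page book embedding is described combinatorially: the vertices are placed on
the spine in the order given by an injective map spine : V -> nat, and every edge
is assigned a page in {0..<k}. Two edges drawn in the same page (a half-plane)
cross iff their endpoints interleave along the spine.\<close>

definition interleave :: "('a \<Rightarrow> nat) \<Rightarrow> 'a \<Rightarrow> 'a \<Rightarrow> 'a \<Rightarrow> 'a \<Rightarrow> bool" where
  "interleave spine u v x y \<longleftrightarrow> spine u < spine x \<and> spine x < spine v \<and> spine v < spine y"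

definition is_book_embedding ::
  "'a set \<Rightarrow> 'a set set \<Rightarrow> nat \<Rightarrow> ('a \<Rightarrow> nat) \<Rightarrow> ('a set \<Rightarrow> nat) \<Rightarrow> bool" where
  "is_book_embedding V E k spine page \<longleftrightarrow>
     inj_on spine V \<and>
     (\<forall>e\<in>E. page e < k) \<and>
     (\<forall>u v x y. {u, v} \<in> E \<longrightarrow> {x, y} \<in> E \<longrightarrow> page {u, v} = page {x, y}
         \<longrightarrow> \<not> interleave spine u v x y)"

definition k_page_embeddable :: "'a set \<Rightarrow> 'a set set \<Rightarrow> nat \<Rightarrow> bool" where
  "k_page_embeddable V E k \<longleftrightarrow> (\<exists>spine page. is_book_embedding V E k spine page)"

definition Kbip_V :: "nat \<Rightarrow> nat \<Rightarrow> (nat + nat) set" where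
  "Kbip_V m n = Inl ` {..<m} \<union> Inr ` {..<n}"

definition Kbip_E :: "nat \<Rightarrow> nat \<Rightarrow> (nat + nat) set set" where
  "Kbip_E m n = {{Inl i, Inr j} | i j. i < m \<and> j < n}"

end

theory Submission
  imports Defs "HOL-Library.Sublist" "HOL-Library.FuncSet"
begin

text \<open>Read the spine order of a book embedding of \<open>K\<^sub>N\<^sub>,\<^sub>n\<close> as a word over
  \<open>bool\<close>, \<open>True\<close> marking the \<open>N\<close> vertices of the small side. If the word has an
  antipodal subsequence \<open>w\<close> of length \<open>2 N\<close> (\<open>w\<^sub>i \<noteq> w\<^sub>i\<^sub>+\<^sub>N\<close> for \<open>i < N\<close>), the \<open>N\<close> edges
  joining the \<open>i\<close>-th and the \<open>(i + N)\<close>-th letter pairwise cross, so \<open>N\<close> pages are needed.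

  Cutting the word after each \<open>True\<close> turns it into a cyclic list \<open>L\<close> of \<open>N\<close> gap lengths
  with sum \<open>n\<close>; an antipodal subsequence arises from gaps \<open>ms \<le> L\<close> (up to rotation) such
  that no two \<open>True\<close>s of the shrunk word are \<open>N\<close> apart. Fix a window length \<open>K\<close>
  and let \<open>H \<ge> K\<close> be the least length such that every cyclic window of length \<open>H\<close>
  contains a gap \<open>\<ge> K\<close>. Counting shows that once \<open>n > N\<^sup>2/4 + O(N K + N\<^sup>3/K\<^sup>2)\<close>, some
  window of length \<open>K\<close> contains \<open>q > 2 N / K\<close> gaps \<open>\<ge> H\<close>; greedily adding \<open>q - 1\<close>
  gaps \<open>\<ge> K\<close> spaced at most \<open>H\<close> apart, and interleaving the two staircases, produces
  \<open>ms\<close>. With \<open>N = k + 1\<close> and \<open>K = \<lceil>k\<^sup>1\<^sup>/\<^sup>4\<rceil>\<^sup>3\<close> the error term is \<open>O(k\<^sup>7\<^sup>/\<^sup>4)\<close>.\<close>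

section \<open>Block words and antipodal words\<close>

definition block :: "nat \<Rightarrow> bool list" where
  "block m = replicate m False @ [True]"

definition blocks :: "nat list \<Rightarrow> bool list" where
  "blocks ms = concat (map block ms)"

definition block_end :: "nat list \<Rightarrow> nat \<Rightarrow> nat" where
  "block_end ms t = t + sum_list (take (Suc t) ms)"

definition antipodal :: "nat \<Rightarrow> bool list \<Rightarrow> bool" where
  "antipodal N ys \<longleftrightarrow> length ys = 2 * N \<and> (\<forall>i<N. ys ! i \<noteq> ys ! (i + N))"

lemma blocks_Nil [simp]: "blocks [] = []"
  and blocks_Cons [simp]: "blocks (m # ms) = replicate m False @ True # blocks ms"
  by (simp_all add: blocks_def block_def)

lemma blocks_append [simp]: "blocks (ms @ ls) = blocks ms @ blocks ls"
  by (simp add: blocks_def)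

lemma length_blocks [simp]: "length (blocks ms) = length ms + sum_list ms"
  by (induction ms) auto

lemma length_filter_blocks:
  "length (filter id (blocks ms)) = length ms"
  "length (filter Not (blocks ms)) = sum_list ms"
  by (induction ms) auto

lemma block_end_Cons:
  "block_end (m # ms) 0 = m"
  "block_end (m # ms) (Suc t) = Suc (m + block_end ms t)"
  by (simp_all add: block_end_def)

lemma block_end_0: "ms \<noteq> [] \<Longrightarrow> block_end ms 0 = ms ! 0"
  by (cases ms) (simp_all add: block_end_def)

lemma block_end_Suc:
  "Suc t < length ms \<Longrightarrow> block_end ms (Suc t) = block_end ms t + 1 + ms ! Suc t"
  by (simp add: block_end_def take_Suc_conv_app_nth)

lemma block_end_last:
  "ms \<noteq> [] \<Longrightarrow> block_end ms (length ms - 1) = length ms - 1 + sum_list ms"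
  by (simp add: block_end_def)

lemma nth_blocks_block_end:
  "p < length (blocks ms) \<Longrightarrow> blocks ms ! p \<Longrightarrow> \<exists>t<length ms. p = block_end ms t"
proof (induction ms arbitrary: p)
  case (Cons m ms)
  consider "p < m" | "p = m" | p' where "p = Suc (m + p')"
    by (metis less_imp_Suc_add linorder_neqE_nat)
  then show ?case
  proof cases
    case 1
    then show ?thesis using Cons.prems(2) by (simp add: nth_append)
  next
    case 2
    then show ?thesis by (auto simp: block_end_Cons intro: exI[of _ 0])
  next
    case 3
    with Cons.prems obtain t where "t < length ms" "p' = block_end ms t"
      using Cons.IH[of p'] by (auto simp: nth_append)
    with 3 show ?thesis by (auto simp: block_end_Cons intro!: exI[of _ "Suc t"])
  qed
qed simp

text \<open>The \<open>N\<close> letters \<open>True\<close> sit in the \<open>N\<close> pairs \<open>{i, i + N}\<close> at most one per pair,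
  hence exactly one per pair.\<close>
lemma antipodalI:
  assumes len: "length w = 2 * N" and trues: "length (filter id w) = N"
    and apart: "\<And>i. i < N \<Longrightarrow> \<not> (w ! i \<and> w ! (i + N))"
  shows "antipodal N w"
proof -
  define A where "A = {i. i < N \<and> w ! i}"
  define B where "B = {i. i < N \<and> w ! (i + N)}"
  have split: "{p. p < 2 * N \<and> w ! p} = A \<union> (\<lambda>i. i + N) ` B"
  proof (rule set_eqI)
    fix p show "p \<in> {p. p < 2 * N \<and> w ! p} \<longleftrightarrow> p \<in> A \<union> (\<lambda>i. i + N) ` B"
      by (cases "p < N") (auto simp: A_def B_def intro!: image_eqI[of _ _ "p - N"])
  qed
  have "card A + card B = N"
  proof -
    have "A \<inter> (\<lambda>i. i + N) ` B = {}" by (auto simp: A_def B_def)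
    then have "card (A \<union> (\<lambda>i. i + N) ` B) = card A + card B"
      by (simp add: card_Un_disjoint card_image A_def B_def)
    then show ?thesis using trues len split by (simp add: length_filter_conv_card)
  qed
  moreover have "A \<inter> B = {}" using apart by (auto simp: A_def B_def)
  ultimately have "card (A \<union> B) = card {..<N}"
    by (simp add: card_Un_disjoint A_def B_def)
  then have "A \<union> B = {..<N}"
    by (intro card_subset_eq) (auto simp: A_def B_def)
  with \<open>A \<inter> B = {}\<close> have "w ! i \<noteq> w ! (i + N)" if "i < N" for i
    using that by (auto simp: A_def B_def)
  with len show ?thesis by (simp add: antipodal_def)
qed

lemma antipodal_blocksI:
  assumes "length ms = N" "sum_list ms = N"
    and "\<And>t t'. t < N \<Longrightarrow> t' < N \<Longrightarrow> block_end ms t' \<noteq> block_end ms t + N"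
  shows "antipodal N (blocks ms)"
proof (rule antipodalI)
  fix i assume "i < N"
  show "\<not> (blocks ms ! i \<and> blocks ms ! (i + N))"
    using nth_blocks_block_end[of i ms] nth_blocks_block_end[of "i + N" ms] assms \<open>i < N\<close>
    by fastforce
qed (use assms in \<open>simp_all add: length_filter_blocks\<close>)

lemma antipodal_iff_mod:
  "antipodal N ys \<longleftrightarrow> length ys = 2 * N \<and> (\<forall>i<2 * N. ys ! i \<noteq> ys ! ((i + N) mod (2 * N)))"
proof -
  have "(\<forall>i<N. ys ! i \<noteq> ys ! (i + N)) \<longleftrightarrow> (\<forall>i<2 * N. ys ! i \<noteq> ys ! ((i + N) mod (2 * N)))"
  proof (intro iffI allI impI)
    fix i assume half: "\<forall>i<N. ys ! i \<noteq> ys ! (i + N)" and "i < 2 * N"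
    show "ys ! i \<noteq> ys ! ((i + N) mod (2 * N))"
    proof (cases "i < N")
      case False
      with \<open>i < 2 * N\<close> have "(i + N) mod (2 * N) = i - N" "i - N < N" "i - N + N = i"
        by (simp_all add: mod_if)
      with half show ?thesis by metis
    qed (use half in simp)
  next
    fix i assume full: "\<forall>i<2 * N. ys ! i \<noteq> ys ! ((i + N) mod (2 * N))" and "i < N"
    then have "i < 2 * N" "(i + N) mod (2 * N) = i + N" by simp_all
    with full show "ys ! i \<noteq> ys ! (i + N)" by metis
  qed
  then show ?thesis by (simp add: antipodal_def)
qed

lemma antipodal_rotate: "antipodal N ys \<Longrightarrow> antipodal N (rotate m ys)"
  unfolding antipodal_iff_mod
proof (intro conjI allI impI; elim conjE)
  fix i assume len: "length ys = 2 * N" and opp: "\<forall>i<2 * N. ys ! i \<noteq> ys ! ((i + N) mod (2 * N))"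
    and "i < 2 * N"
  define j where "j = (m + i) mod (2 * N)"
  have pos: "0 < 2 * N" using \<open>i < 2 * N\<close> by simp
  have "rotate m ys ! i = ys ! j"
    using len \<open>i < 2 * N\<close> by (simp add: nth_rotate j_def)
  moreover have "rotate m ys ! ((i + N) mod (2 * N)) = ys ! ((j + N) mod (2 * N))"
  proof -
    have "(m + (i + N) mod (2 * N)) mod (2 * N) = (j + N) mod (2 * N)"
      unfolding j_def by (metis mod_add_left_eq mod_add_right_eq add.assoc)
    then show ?thesis using len pos by (simp add: nth_rotate)
  qed
  moreover have "j < 2 * N" using pos by (simp add: j_def)
  ultimately show "rotate m ys ! i \<noteq> rotate m ys ! ((i + N) mod (2 * N))"
    using opp by metis
qed simp

lemma antipodal_subseq_swap:
  assumes "subseq ys (b @ a)" "antipodal N ys"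
  obtains ys' where "subseq ys' (a @ b)" "antipodal N ys'"
proof -
  obtain y1 y2 where y: "ys = y1 @ y2" "subseq y1 b" "subseq y2 a"
    using assms(1) by (auto simp: subseq_append_iff)
  have "subseq (y2 @ y1) (a @ b)" using y by (simp add: list_emb_append_mono)
  moreover have "y2 @ y1 = rotate (length y1) ys" using y by (simp add: rotate_append)
  ultimately show thesis using that antipodal_rotate[OF assms(2)] by metis
qed

lemma subseq_blocks: "list_all2 (\<le>) ms ls \<Longrightarrow> subseq (blocks ms) (blocks ls)"
proof (induction ms ls rule: list_all2_induct)
  case (Cons m ms l ls)
  then have "replicate l False = replicate m False @ replicate (l - m) False"
    by (metis le_add_diff_inverse replicate_add)
  then have "subseq (replicate m False) (replicate l False)"
    by (metis subseq_rev_drop_many subseq_order.order_refl)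
  with Cons.IH show ?case by (simp add: list_emb_append_mono)
qed simp

lemma blocks_decomposition: obtains ls r where "w = blocks ls @ replicate r False"
proof (induction w arbitrary: thesis rule: rev_induct)
  case Nil then show ?case by (metis append_Nil blocks_Nil replicate_0)
next
  case (snoc x w)
  obtain ls r where w: "w = blocks ls @ replicate r False" using snoc.IH by blast
  show ?case
  proof (cases x)
    case True
    then have "w @ [x] = blocks (ls @ [r]) @ replicate 0 False" using w by simp
    then show ?thesis by (rule snoc.prems)
  next
    case False
    then have "w @ [x] = blocks ls @ replicate (Suc r) False"
      using w by (simp add: replicate_append_same[symmetric])
    then show ?thesis by (rule snoc.prems)
  qed
qed

lemma subseq_map_obtain:
  assumes "subseq ys (map f xs)" obtains zs where "subseq zs xs" "ys = map f zs"
  using assms by (metis subseq_conv_nths nths_map)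

lemma sorted_wrt_subseq: "subseq xs ys \<Longrightarrow> sorted_wrt P ys \<Longrightarrow> sorted_wrt P xs"
  by (induction rule: list_emb.induct) (auto dest: list_emb_set)

section \<open>Interleaving two staircases\<close>

definition segment :: "(nat \<Rightarrow> nat) \<Rightarrow> nat \<Rightarrow> nat \<Rightarrow> nat" where
  "segment X m t = (THE j. j < m \<and> X j \<le> t \<and> t < X (Suc j))"

context
  fixes X :: "nat \<Rightarrow> nat" and m :: nat
  assumes X_inc: "\<And>j. j < m \<Longrightarrow> X j < X (Suc j)"
begin

lemma lift_Suc_mono_less_upto: "i < j \<Longrightarrow> j \<le> m \<Longrightarrow> X i < X j"
  by (rule lift_Suc_mono_less_ivl[where N = "{..<m}"]) (auto intro: X_inc)

lemma lift_Suc_mono_le_upto: "i \<le> j \<Longrightarrow> j \<le> m \<Longrightarrow> X i \<le> X j"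
  using lift_Suc_mono_less_upto[of i j] by (cases "i = j") auto

lemma segment_unique:
  assumes "j < m" "X j \<le> t" "t < X (Suc j)" "j' < m" "X j' \<le> t" "t < X (Suc j')"
  shows "j = j'"
  using lift_Suc_mono_le_upto[of "Suc j" j'] lift_Suc_mono_le_upto[of "Suc j'" j] assms
  by (cases j j' rule: linorder_cases) auto

lemma segment_eqI:
  "j < m \<Longrightarrow> X j \<le> t \<Longrightarrow> t < X (Suc j) \<Longrightarrow> segment X m t = j"
  unfolding segment_def by (rule the_equality) (auto intro: segment_unique)

lemma segment_bounds:
  assumes "X 0 \<le> t" "t < X m"
  shows "segment X m t < m \<and> X (segment X m t) \<le> t \<and> t < X (Suc (segment X m t))"
proof -
  have "\<exists>j<m. X j \<le> t \<and> t < X (Suc j)"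
    using assms X_inc
  proof (induction m)
    case (Suc m)
    then show ?case by (cases "t < X m") (auto intro: less_SucI)
  qed simp
  then show ?thesis using segment_eqI by auto
qed

end

text \<open>Letter \<open>t < Y 0\<close> goes to the first half, shifted right by \<open>Y (j + 1) - Y 0\<close> when
  \<open>X j \<le> t < X (j + 1)\<close>; letter \<open>t \<ge> Y 0\<close> goes to the second half, shifted by \<open>X l\<close> when
  \<open>Y l \<le> t < Y (l + 1)\<close>. Then no two letters are exactly \<open>N\<close> apart, and the gap in front of
  letter \<open>t\<close> is nonzero only at the breakpoints \<open>X j\<close> (a \<open>Y\<close>-step, at most \<open>H\<close>) and \<open>Y l\<close>
  (an \<open>X\<close>-step, at most \<open>K\<close>).\<close>
locale staircase =
  fixes N K H q :: nat and X Y :: "nat \<Rightarrow> nat"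
  assumes q_pos: "1 \<le> q"
    and X_0: "X 0 = 0"
    and X_inc: "\<And>j. j < q - 1 \<Longrightarrow> X j < X (Suc j)"
    and X_step: "\<And>j. j < q - 1 \<Longrightarrow> X (Suc j) \<le> X j + K"
    and Y_0: "Y 0 = X (q - 1)"
    and Y_q: "Y q = N"
    and Y_inc: "\<And>l. l < q \<Longrightarrow> Y l < Y (Suc l)"
    and Y_step: "\<And>l. l < q \<Longrightarrow> Y (Suc l) \<le> Y l + H"
begin

definition pos :: "nat \<Rightarrow> nat" where
  "pos t = (if t < Y 0 then t + Y (Suc (segment X (q - 1) t)) - Y 0
            else t + N - Y 0 + X (segment Y q t))"

definition gap :: "nat \<Rightarrow> nat" where
  "gap t = (if t = 0 then pos 0 else pos t - pos (t - 1) - 1)"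

lemmas X_less = lift_Suc_mono_less_upto[where X = X and m = "q - 1", OF X_inc]
  and X_le = lift_Suc_mono_le_upto[where X = X and m = "q - 1", OF X_inc]
  and Y_less = lift_Suc_mono_less_upto[where X = Y and m = q, OF Y_inc]
  and Y_le = lift_Suc_mono_le_upto[where X = Y and m = q, OF Y_inc]

lemma Y_0_less_N: "Y 0 < N"
  using Y_less[of 0 q] q_pos Y_q by simp

lemma Y_ge_Y_0: "l \<le> q \<Longrightarrow> Y 0 \<le> Y l"
  using Y_le[of 0 l] by simp

lemma X_segment:
  assumes "t < Y 0" obtains j where "j < q - 1" "X j \<le> t" "t < X (Suc j)"
  using segment_bounds[where X = X and m = "q - 1", OF X_inc, of t] assms X_0 Y_0 by auto

lemma Y_segment:
  assumes "Y 0 \<le> t" "t < N" obtains l where "l < q" "Y l \<le> t" "t < Y (Suc l)"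
  using segment_bounds[where X = Y and m = q, OF Y_inc, of t] assms Y_q by auto

lemma pos_X:
  "t < Y 0 \<Longrightarrow> j < q - 1 \<Longrightarrow> X j \<le> t \<Longrightarrow> t < X (Suc j) \<Longrightarrow> pos t = t + Y (Suc j) - Y 0"
  using segment_eqI[where X = X and m = "q - 1", OF X_inc] by (simp add: pos_def)

lemma pos_Y:
  "Y 0 \<le> t \<Longrightarrow> l < q \<Longrightarrow> Y l \<le> t \<Longrightarrow> t < Y (Suc l) \<Longrightarrow> pos t = t + N - Y 0 + X l"
  using segment_eqI[where X = Y and m = q, OF Y_inc] by (simp add: pos_def)

lemma pos_lower_half: "t < Y 0 \<Longrightarrow> pos t < N"
proof -
  assume "t < Y 0"
  then obtain j where j: "j < q - 1" "X j \<le> t" "t < X (Suc j)" by (rule X_segment)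
  have "Y (Suc j) < Y q" using Y_less[of "Suc j" q] j by simp
  with Y_ge_Y_0[of "Suc j"] j \<open>t < Y 0\<close> show ?thesis using pos_X[OF \<open>t < Y 0\<close> j] Y_q by simp
qed

lemma pos_upper_half: "Y 0 \<le> t \<Longrightarrow> t < N \<Longrightarrow> N \<le> pos t \<and> pos t < 2 * N"
proof -
  assume t: "Y 0 \<le> t" "t < N"
  then obtain l where l: "l < q" "Y l \<le> t" "t < Y (Suc l)" by (rule Y_segment)
  have "X l \<le> X (q - 1)" using X_le[of l "q - 1"] l by simp
  then show ?thesis using pos_Y[OF t(1) l] t Y_0 by linarith
qed

lemma pos_less_Suc: "Suc t < N \<Longrightarrow> pos t < pos (Suc t)"
proof (cases "Suc t < Y 0")
  case True
  have "t < Y 0" using True by simp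
  then obtain j where j: "j < q - 1" "X j \<le> t" "t < X (Suc j)" by (rule X_segment)
  obtain j' where j': "j' < q - 1" "X j' \<le> Suc t" "Suc t < X (Suc j')"
    using True by (rule X_segment)
  have "j \<le> j'" using X_le[of "Suc j'" j] j j' by (cases "j \<le> j'") auto
  then have "Y (Suc j) \<le> Y (Suc j')" using Y_le[of "Suc j" "Suc j'"] j' by simp
  moreover have "Y 0 \<le> Y (Suc j)" using Y_ge_Y_0[of "Suc j"] j by simp
  ultimately show ?thesis using pos_X[OF \<open>t < Y 0\<close> j] pos_X[OF True j'] by simp
next
  case False
  assume "Suc t < N"
  show ?thesis
  proof (cases "t < Y 0")
    case True
    then have "pos t < N" by (rule pos_lower_half)
    moreover have "N \<le> pos (Suc t)" using pos_upper_half[of "Suc t"] False \<open>Suc t < N\<close> by simp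
    ultimately show ?thesis by simp
  next
    case t: False
    have "Y 0 \<le> t" "t < N" "Y 0 \<le> Suc t" using t False \<open>Suc t < N\<close> by simp_all
    obtain l where l: "l < q" "Y l \<le> t" "t < Y (Suc l)"
      using \<open>Y 0 \<le> t\<close> \<open>t < N\<close> by (rule Y_segment)
    obtain l' where l': "l' < q" "Y l' \<le> Suc t" "Suc t < Y (Suc l')"
      using \<open>Y 0 \<le> Suc t\<close> \<open>Suc t < N\<close> by (rule Y_segment)
    have "l \<le> l'" using Y_le[of "Suc l'" l] l l' by (cases "l \<le> l'") auto
    then have "X l \<le> X l'" using X_le[of l l'] l' by simp
    then show ?thesis using pos_Y[of t l] pos_Y[of "Suc t" l'] l l' False t by simp
  qed
qed

lemma pos_last: "pos (N - 1) = 2 * N - 1"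
proof -
  have "q - 1 < q" "Y (q - 1) \<le> N - 1" "N - 1 < Y (Suc (q - 1))"
    using q_pos Y_less[of "q - 1" q] Y_q by auto
  then show ?thesis using pos_Y[of "N - 1" "q - 1"] Y_0_less_N Y_0 by simp
qed

lemma pos_not_antipodal:
  assumes "t < N" "t' < N" shows "pos t' \<noteq> pos t + N"
proof
  assume eq: "pos t' = pos t + N"
  have t': "Y 0 \<le> t'"
    using eq pos_lower_half[of t'] by (cases "Y 0 \<le> t'") auto
  have t: "t < Y 0"
    using eq pos_upper_half[of t] pos_upper_half[OF t'] assms by (cases "t < Y 0") auto
  obtain j where j: "j < q - 1" "X j \<le> t" "t < X (Suc j)" using t by (rule X_segment)
  obtain l where l: "l < q" "Y l \<le> t'" "t' < Y (Suc l)" using t' assms(2) by (rule Y_segment)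
  have "t' + X l = t + Y (Suc j)"
  proof -
    have "Y 0 \<le> Y (Suc j)" using Y_ge_Y_0[of "Suc j"] j by simp
    then show ?thesis using eq pos_X[OF t j] pos_Y[OF t' l] Y_0_less_N by simp
  qed
  moreover have "l \<le> j \<Longrightarrow> X l \<le> X j \<and> Y (Suc l) \<le> Y (Suc j)"
    using X_le[of l j] Y_le[of "Suc l" "Suc j"] j by simp
  moreover have "j < l \<Longrightarrow> X (Suc j) \<le> X l \<and> Y (Suc j) \<le> Y l"
    using X_le[of "Suc j" l] Y_le[of "Suc j" l] l by simp
  ultimately show False using j l by (cases "l \<le> j") auto
qed

lemma pos_at_X: "j < q \<Longrightarrow> pos (X j) = X j + Y (Suc j) - Y 0"
proof (cases "j < q - 1")
  case True
  then show ?thesis using X_less[of j "q - 1"] X_inc[of j] Y_0 by (intro pos_X) simp_all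
next
  case False
  assume "j < q"
  then have "j = q - 1" using False by simp
  then show ?thesis
    using pos_Y[of "X j" 0] Y_inc[of 0] q_pos Y_0 Y_q X_0 by simp
qed

lemma pos_before_X:
  assumes "0 < j" "j < q" shows "pos (X j - 1) = X j - 1 + Y j - Y 0"
proof -
  obtain i where j: "j = Suc i" using assms(1) by (cases j) auto
  have "X i < X j" using X_less[of i j] j assms by simp
  moreover have "X j \<le> Y 0" using X_le[of j "q - 1"] assms Y_0 by simp
  ultimately show ?thesis using pos_X[of "X j - 1" i] j assms by simp
qed

lemma pos_at_Y: "l < q \<Longrightarrow> pos (Y l) = Y l + N - Y 0 + X l"
  using Y_ge_Y_0[of l] Y_inc[of l] by (intro pos_Y) simp_all

lemma pos_before_Y:
  assumes "0 < l" "l < q" shows "pos (Y l - 1) = Y l - 1 + N - Y 0 + X (l - 1)"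
proof -
  have "Y 0 \<le> Y (l - 1)" "Y (l - 1) < Y l"
    using Y_ge_Y_0[of "l - 1"] Y_inc[of "l - 1"] assms by simp_all
  then show ?thesis using assms by (intro pos_Y) simp_all
qed

lemma gap_at_X: "j < q \<Longrightarrow> gap (X j) = Y (Suc j) - Y j"
proof (cases "j = 0")
  case False
  assume "j < q"
  have "0 < X j" "Y 0 \<le> Y j" "Y j < Y (Suc j)"
    using X_less[of 0 j] X_0 Y_ge_Y_0[of j] Y_inc[of j] False \<open>j < q\<close> by simp_all
  then show ?thesis using pos_at_X[OF \<open>j < q\<close>] pos_before_X[of j] False \<open>j < q\<close>
    by (simp add: gap_def)
qed (use pos_at_X[of 0] X_0 in \<open>simp add: gap_def\<close>)

lemma gap_at_Y: "0 < l \<Longrightarrow> l < q \<Longrightarrow> gap (Y l) = X l - X (l - 1)"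
proof -
  assume l: "0 < l" "l < q"
  have "Y 0 < Y l" "X (l - 1) < X l" using Y_less[of 0 l] X_inc[of "l - 1"] l by simp_all
  then show ?thesis using pos_at_Y[of l] pos_before_Y[of l] l by (simp add: gap_def)
qed

lemma gap_between:
  assumes "t < N" "t \<notin> X ` {..<q}" "t \<notin> Y ` {0<..<q}" shows "gap t = 0"
proof (cases "t < Y 0")
  case True
  then obtain j where j: "j < q - 1" "X j \<le> t" "t < X (Suc j)" by (rule X_segment)
  with assms(2) have "X j < t" by force
  then show ?thesis using pos_X[OF True j] pos_X[of "t - 1" j] j True by (simp add: gap_def)
next
  case False
  then have "Y 0 \<le> t" by simp
  from this assms(1) obtain l where l: "l < q" "Y l \<le> t" "t < Y (Suc l)" by (rule Y_segment)
  have "Y l < t"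
  proof (cases "l = 0")
    case True
    then show ?thesis using assms(2) l Y_0 q_pos by (cases "t = Y 0") force+
  qed (use assms(3) l in force)
  moreover have "Y 0 \<le> Y l" using Y_ge_Y_0[of l] l by simp
  ultimately show ?thesis using pos_Y[OF _ l] pos_Y[of "t - 1" l] l False by (simp add: gap_def)
qed

lemma block_end_gaps: "t < N \<Longrightarrow> block_end (map gap [0..<N]) t = pos t"
proof (induction t)
  case 0
  then show ?case by (simp add: block_end_0 gap_def)
next
  case (Suc t)
  then show ?case using pos_less_Suc[of t] by (simp add: block_end_Suc gap_def)
qed

lemma antipodal_blocks_gaps: "antipodal N (blocks (map gap [0..<N]))"
proof (rule antipodal_blocksI)
  have "block_end (map gap [0..<N]) (N - 1) = 2 * N - 1"
    using block_end_gaps[of "N - 1"] pos_last Y_0_less_N by simp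
  then show "sum_list (map gap [0..<N]) = N"
    using block_end_last[of "map gap [0..<N]"] Y_0_less_N by simp
qed (simp_all add: block_end_gaps pos_not_antipodal)

lemma antipodal_blocks_below:
  assumes "\<And>j. j < q \<Longrightarrow> H \<le> f (X j)" and "\<And>l. 0 < l \<Longrightarrow> l < q \<Longrightarrow> K \<le> f (Y l)"
  shows "\<exists>ms. list_all2 (\<le>) ms (map f [0..<N]) \<and> antipodal N (blocks ms)"
proof (intro exI conjI)
  show "list_all2 (\<le>) (map gap [0..<N]) (map f [0..<N])"
  proof (rule list_all2_all_nthI)
    fix t assume "t < length (map gap [0..<N])"
    then have "t < N" by simp
    have "gap t \<le> f t"
    proof (cases "t \<in> X ` {..<q}")
      case True
      then obtain j where j: "j < q" "t = X j" by blast
      have "Y (Suc j) - Y j \<le> H" using Y_step[of j] j by simp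
      then show ?thesis using gap_at_X[of j] assms(1)[of j] j by simp
    next
      case notX: False
      show ?thesis
      proof (cases "t \<in> Y ` {0<..<q}")
        case True
        then obtain l where l: "0 < l" "l < q" "t = Y l" by auto
        have "l - 1 < q - 1" using l by simp
        then have "X l - X (l - 1) \<le> K" using X_step[of "l - 1"] l by simp
        then show ?thesis using gap_at_Y[of l] assms(2)[of l] l by simp
      qed (use notX gap_between \<open>t < N\<close> in simp)
    qed
    then show "map gap [0..<N] ! t \<le> map f [0..<N] ! t" using \<open>t < N\<close> by simp
  qed simp
qed (rule antipodal_blocks_gaps)

end

section \<open>Cyclic density\<close>

definition cyclic_dense :: "nat set \<Rightarrow> nat \<Rightarrow> nat \<Rightarrow> bool" where
  "cyclic_dense G N D \<longleftrightarrow> (\<forall>t<N. \<exists>d. 1 \<le> d \<and> d \<le> D \<and> (t + d) mod N \<in> G)"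

lemma cyclic_dense_mono: "cyclic_dense G N D \<Longrightarrow> D \<le> D' \<Longrightarrow> cyclic_dense G N D'"
  unfolding cyclic_dense_def by (meson order_trans)

lemma cyclic_dense_length:
  assumes "G \<subseteq> {..<N}" "G \<noteq> {}" shows "cyclic_dense G N N"
  unfolding cyclic_dense_def
proof (intro allI impI)
  fix t assume "t < N"
  obtain g where "g \<in> G" "g < N" using assms by blast
  define d where "d = (if t < g then g - t else g + N - t)"
  have "(t + d) mod N = g" using \<open>g < N\<close> \<open>t < N\<close> by (simp add: d_def)
  moreover have "1 \<le> d" "d \<le> N" using \<open>g < N\<close> \<open>t < N\<close> by (auto simp: d_def)
  ultimately show "\<exists>d. 1 \<le> d \<and> d \<le> N \<and> (t + d) mod N \<in> G" using \<open>g \<in> G\<close> by auto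
qed

lemma card_le_if_not_cyclic_dense:
  assumes "G \<subseteq> {..<N}" "D < N" "\<not> cyclic_dense G N D"
  shows "card G + D \<le> N"
proof -
  obtain t where t: "t < N" "\<And>d. 1 \<le> d \<Longrightarrow> d \<le> D \<Longrightarrow> (t + d) mod N \<notin> G"
    using assms(3) unfolding cyclic_dense_def by blast
  define Z where "Z = (\<lambda>d. (t + d) mod N) ` {1..D}"
  have "inj_on (\<lambda>d. (t + d) mod N) {1..D}"
  proof (rule inj_onI)
    fix a b assume "a \<in> {1..D}" "b \<in> {1..D}" "(t + a) mod N = (t + b) mod N"
    then show "a = b" using assms(2) t(1) by (auto simp: mod_if split: if_splits)
  qed
  then have "card Z = D" by (simp add: Z_def card_image)
  moreover have "G \<inter> Z = {}" "Z \<subseteq> {..<N}" using t by (auto simp: Z_def)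
  ultimately have "card (G \<union> Z) = card G + D"
    using finite_subset[OF assms(1)] by (simp add: card_Un_disjoint finite_subset)
  moreover have "card (G \<union> Z) \<le> card {..<N}"
    using assms(1) \<open>Z \<subseteq> {..<N}\<close> by (intro card_mono) auto
  ultimately show ?thesis by simp
qed

lemma cyclic_dense_least_scale:
  assumes "G \<subseteq> {..<N}" "G \<noteq> {}" "1 \<le> K"
  obtains H where "K \<le> H" "cyclic_dense G N H" "H = K \<or> (H \<le> N \<and> card G + H \<le> N + 1)"
proof -
  define P where "P D \<longleftrightarrow> K \<le> D \<and> cyclic_dense G N D" for D
  define H where "H = (LEAST D. P D)"
  have "P (max K N)"
    using cyclic_dense_mono[OF cyclic_dense_length[OF assms(1,2)]] by (simp add: P_def)
  then have "P H" "H \<le> max K N" unfolding H_def by (rule LeastI, rule Least_le)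
  then have H: "K \<le> H" "cyclic_dense G N H" "H \<le> max K N" by (simp_all add: P_def)
  moreover have "H \<le> N \<and> card G + H \<le> N + 1" if "H \<noteq> K"
  proof -
    have "\<not> P (H - 1)" using Least_le[of P "H - 1"] that H(1) assms(3) unfolding H_def by fastforce
    then have "\<not> cyclic_dense G N (H - 1)" using H(1) that by (simp add: P_def)
    moreover have "H \<le> N" using H(1,3) that by simp
    moreover have "H - 1 < N" using \<open>H \<le> N\<close> H(1) assms(3) by simp
    ultimately show ?thesis using card_le_if_not_cyclic_dense[OF assms(1), of "H - 1"] by simp
  qed
  ultimately show thesis using that by blast
qed

lemma length_filter_rotate: "length (filter P (rotate n xs)) = length (filter P xs)"
proof (induction n)
  case (Suc n) then show ?case by (cases "rotate n xs") (simp_all split: if_splits)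
qed simp

lemma cyclic_dense_rotate:
  assumes "length L = N" "cyclic_dense {t. t < N \<and> P (L ! t)} N D"
  shows "cyclic_dense {t. t < N \<and> P (rotate r L ! t)} N D"
  unfolding cyclic_dense_def
proof (intro allI impI)
  fix s assume "s < N"
  then have "(r + s) mod N < N" by simp
  then obtain d where d: "1 \<le> d" "d \<le> D" "P (L ! (((r + s) mod N + d) mod N))"
    using assms(2) unfolding cyclic_dense_def by blast
  have "((r + s) mod N + d) mod N = (r + (s + d) mod N) mod N"
    by (simp add: mod_simps add.assoc)
  moreover have "(s + d) mod N < N" using \<open>s < N\<close> by simp
  ultimately have "rotate r L ! ((s + d) mod N) = L ! (((r + s) mod N + d) mod N)"
    using assms(1) by (simp add: nth_rotate)
  with d show "\<exists>d. 1 \<le> d \<and> d \<le> D \<and> (s + d) mod N \<in> {t. t < N \<and> P (rotate r L ! t)}"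
    using \<open>(s + d) mod N < N\<close> by auto
qed

lemma card_nth_rotate:
  "card {t. t < length L \<and> P (rotate r L ! t)} = card {t. t < length L \<and> P (L ! t)}"
  using length_filter_rotate[of P r L] by (simp add: length_filter_conv_card)

section \<open>Window covers\<close>

definition window_cover :: "nat set \<Rightarrow> nat \<Rightarrow> nat \<Rightarrow> nat \<Rightarrow> bool" where
  "window_cover S lo hi D \<longleftrightarrow> (\<forall>t. lo \<le> t \<and> t < hi \<longrightarrow> (\<exists>z\<in>insert hi S. t < z \<and> z \<le> t + D))"

lemma window_cover_mono: "window_cover S lo hi D \<Longrightarrow> S \<subseteq> S' \<Longrightarrow> window_cover S' lo hi D"
  unfolding window_cover_def by blast

lemma window_cover_shrink: "window_cover S lo hi D \<Longrightarrow> lo \<le> lo' \<Longrightarrow> window_cover S lo' hi D"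
  unfolding window_cover_def by auto

lemma window_cover_extend:
  "window_cover S p hi D \<Longrightarrow> p \<in> S \<Longrightarrow> p \<le> lo + D \<Longrightarrow> window_cover S lo hi D"
  unfolding window_cover_def by (metis insert_iff le_trans linorder_not_less add_le_mono1)

lemma window_cover_furthest:
  assumes "finite P" "window_cover P lo hi D" "lo + D < hi"
  obtains p where "p \<in> P" "lo < p" "p \<le> lo + D" "\<And>z. z \<in> P \<Longrightarrow> z \<le> lo + D \<Longrightarrow> z \<le> p"
proof -
  define A where "A = {z \<in> P. lo < z \<and> z \<le> lo + D}"
  have "\<exists>z\<in>insert hi P. lo < z \<and> z \<le> lo + D"
    using assms(2) \<open>lo + D < hi\<close> unfolding window_cover_def by (metis add_lessD1 order_refl)
  then have "A \<noteq> {}" using assms(3) by (auto simp: A_def)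
  moreover have "finite A" using assms(1) by (simp add: A_def)
  ultimately have max: "Max A \<in> A" "\<And>z. z \<in> A \<Longrightarrow> z \<le> Max A"
    using Max_in Max_ge by blast+
  show thesis
  proof (rule that[of "Max A"])
    fix z assume "z \<in> P" "z \<le> lo + D"
    then show "z \<le> Max A" using max by (cases "lo < z") (auto simp: A_def)
  qed (use max in \<open>auto simp: A_def\<close>)
qed

lemma window_cover_insert_two:
  assumes "window_cover S p2 hi D" "p1 \<le> lo + D" "p2 \<le> p1 + D"
  shows "window_cover (insert p1 (insert p2 S)) lo hi D"
proof -
  have "window_cover (insert p1 (insert p2 S)) p2 hi D"
    using assms(1) by (rule window_cover_mono) auto
  then have "window_cover (insert p1 (insert p2 S)) p1 hi D"
    by (rule window_cover_extend) (use assms(3) in simp_all)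
  then show ?thesis by (rule window_cover_extend) (use assms(2) in simp_all)
qed

text \<open>Greedy choice: any two consecutive points picked lie within \<open>D\<close> of each other,
  but every second point advances by more than \<open>D\<close>.\<close>
lemma window_cover_greedy:
  assumes "P \<subseteq> {..<hi}" "window_cover P lo hi D"
  shows "\<exists>S\<subseteq>P. window_cover S lo hi D \<and> card S * D \<le> 2 * (hi - lo)"
  using assms(2)
proof (induction "hi - lo" arbitrary: lo rule: less_induct)
  case less
  have fin: "finite P" using assms(1) finite_subset by blast
  show ?case
  proof (cases "hi \<le> lo + D")
    case True
    then have "window_cover {} lo hi D" by (auto simp: window_cover_def)
    then show ?thesis by force
  next
    case False
    then obtain p1 where p1: "p1 \<in> P" "lo < p1" "p1 \<le> lo + D"
      and p1_max: "\<And>z. z \<in> P \<Longrightarrow> z \<le> lo + D \<Longrightarrow> z \<le> p1"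
      using window_cover_furthest[OF fin less.prems] by auto
    have p1_hi: "p1 < hi" using p1 assms(1) by auto
    show ?thesis
    proof (cases "hi \<le> p1 + D")
      case True
      then have "window_cover {p1} p1 hi D" by (auto simp: window_cover_def)
      then have "window_cover {p1} lo hi D" using p1 by (auto intro: window_cover_extend)
      with p1 False show ?thesis by (intro exI[of _ "{p1}"]) auto
    next
      case far: False
      have "window_cover P p1 hi D" using less.prems p1 by (auto intro: window_cover_shrink)
      then obtain p2 where p2: "p2 \<in> P" "p1 < p2" "p2 \<le> p1 + D"
        using window_cover_furthest[OF fin _ ] far by (metis not_less)
      have p2_lo: "lo + D < p2" using p1_max[of p2] p2 by force
      have "window_cover P p2 hi D" using less.prems p1 p2 by (auto intro: window_cover_shrink)
      moreover have "hi - p2 < hi - lo" using p2 p2_lo assms(1) by auto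
      ultimately obtain S' where S': "S' \<subseteq> P" "window_cover S' p2 hi D"
          "card S' * D \<le> 2 * (hi - p2)"
        using less.hyps by blast
      define S where "S = insert p1 (insert p2 S')"
      have "window_cover S lo hi D"
        using window_cover_insert_two[OF S'(2)] p1 p2 by (simp add: S_def)
      moreover have "card S * D \<le> 2 * (hi - lo)"
      proof -
        have "card S \<le> card S' + 2"
          using finite_subset[OF S'(1) fin] by (simp add: S_def card_insert_if)
        then have "card S * D \<le> (card S' + 2) * D" by (rule mult_right_mono) simp
        also have "\<dots> = card S' * D + 2 * D" by (simp add: algebra_simps)
        also have "\<dots> \<le> 2 * (hi - lo)" using S'(3) p2 p2_lo assms(1) by auto
        finally show ?thesis .
      qed
      moreover have "S \<subseteq> P" using S' p1 p2 by (auto simp: S_def)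
      ultimately show ?thesis by blast
    qed
  qed
qed

lemma next_le_of_strict_mono:
  fixes Y :: "nat \<Rightarrow> 'a::linorder"
  assumes "\<And>i j. i < j \<Longrightarrow> j \<le> n \<Longrightarrow> Y i < Y j" "l < n" "j \<le> n" "Y l < Y j"
  shows "Y (Suc l) \<le> Y j"
proof -
  have "\<not> j \<le> l"
  proof
    assume "j \<le> l"
    then have "Y j \<le> Y l" using assms(1)[of j l] assms(2) by (cases "j = l") auto
    then show False using assms(4) by simp
  qed
  then have "Suc l \<le> j" by simp
  then show ?thesis using assms(1)[of "Suc l" j] assms(3) by (cases "Suc l = j") auto
qed

lemma window_cover_staircase:
  assumes "finite S" "S \<subseteq> {lo<..<hi}" "window_cover S lo hi D" "lo < hi"
  obtains Y where "Y 0 = lo" "Y (Suc (card S)) = hi"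
    "\<And>l. l \<le> card S \<Longrightarrow> Y l < Y (Suc l) \<and> Y (Suc l) \<le> Y l + D"
    "\<And>l. 0 < l \<Longrightarrow> l \<le> card S \<Longrightarrow> Y l \<in> S"
proof -
  define ys where "ys = sorted_list_of_set S"
  define Y where "Y l = (if l = 0 then lo else if l \<le> card S then ys ! (l - 1) else hi)" for l
  have ys: "sorted_wrt (<) ys" "length ys = card S" "set ys = S"
    using assms(1) by (simp_all add: ys_def)
  have Y_in: "Y l \<in> S" if "0 < l" "l \<le> card S" for l
    using that ys by (auto simp: Y_def)
  have Y_less: "Y l < Y l'" if "l < l'" "l' \<le> Suc (card S)" for l l'
  proof (cases "l = 0")
    case True
    then show ?thesis using Y_in[of l'] assms(2,4) that by (cases "l' \<le> card S") (auto simp: Y_def)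
  next
    case False
    then show ?thesis
      using Y_in[of l] assms(2) that sorted_wrt_nth_less[OF ys(1), of "l - 1" "l' - 1"] ys(2)
      by (cases "l' \<le> card S") (auto simp: Y_def)
  qed
  have "Y (Suc l) \<le> Y l + D" if "l \<le> card S" for l
  proof -
    have "lo \<le> Y l" "Y l < hi" using Y_less[of 0 l] Y_less[of l "Suc (card S)"] that
      by (cases "l = 0", auto simp: Y_def)
    then obtain z where z: "z \<in> insert hi S" "Y l < z" "z \<le> Y l + D"
      using assms(3) unfolding window_cover_def by blast
    moreover have "\<exists>j\<le>Suc (card S). z = Y j"
    proof (cases "z = hi")
      case False
      then obtain i where "i < card S" "z = ys ! i" using z ys by (auto simp: in_set_conv_nth)
      then show ?thesis by (intro exI[of _ "Suc i"]) (simp add: Y_def)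
    qed (auto simp: Y_def intro: exI[of _ "Suc (card S)"])
    then obtain j where "j \<le> Suc (card S)" "z = Y j" by blast
    then have "Y (Suc l) \<le> z"
      using next_le_of_strict_mono[where Y = Y and n = "Suc (card S)", OF Y_less] that z(2) by simp
    with z show ?thesis by simp
  qed
  with Y_less Y_in show thesis by (intro that[of Y]) (auto simp: Y_def)
qed

lemma window_cover_cyclic_dense:
  assumes "cyclic_dense G N D" shows "window_cover (G \<inter> {lo<..<N}) lo N D"
  unfolding window_cover_def
proof (intro allI impI)
  fix t assume t: "lo \<le> t \<and> t < N"
  then obtain d where d: "1 \<le> d" "d \<le> D" "(t + d) mod N \<in> G"
    using assms unfolding cyclic_dense_def by blast
  show "\<exists>z\<in>insert N (G \<inter> {lo<..<N}). t < z \<and> z \<le> t + D"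
  proof (cases "t + d < N")
    case True
    then have "t + d \<in> G \<inter> {lo<..<N}" using d t by simp
    then show ?thesis using d by (intro bexI[of _ "t + d"]) auto
  qed (use d t in force)
qed

lemma window_cover_subset_card:
  assumes "P \<subseteq> {..<hi}" "window_cover P lo hi D" "2 * (hi - lo) < Suc n * D" "n \<le> card P"
  obtains S where "S \<subseteq> P" "card S = n" "window_cover S lo hi D"
proof -
  obtain S where S: "S \<subseteq> P" "window_cover S lo hi D" "card S * D \<le> 2 * (hi - lo)"
    using window_cover_greedy[OF assms(1,2)] by blast
  then have "card S * D < Suc n * D" using assms(3) by linarith
  then have "card S < Suc n" using mult_less_cancel2 by blast
  then have "card S \<le> n" by simp
  moreover have "finite P" using assms(1) finite_subset by blast
  ultimately obtain S' where "S \<subseteq> S'" "S' \<subseteq> P" "card S' = n"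
    using exists_subset_between[of S n P] assms(4) S(1) by blast
  then show thesis using that window_cover_mono[OF S(2)] by blast
qed

section \<open>Heavy cyclic gap lists\<close>

lemma antipodal_blocks_from_staircases:
  fixes L xs :: "nat list" and S :: "nat set" and N K H :: nat
  assumes len: "length L = N"
    and xs: "sorted_wrt (<) xs" "xs \<noteq> []" "xs ! 0 = 0"
      "\<And>x. x \<in> set xs \<Longrightarrow> x < K \<and> x < N \<and> H \<le> L ! x"
    and S: "finite S" "S \<subseteq> {last xs<..<N}" "card S = length xs - 1" "window_cover S (last xs) N H"
      "\<And>s. s \<in> S \<Longrightarrow> K \<le> L ! s"
  shows "\<exists>ms. list_all2 (\<le>) ms L \<and> antipodal N (blocks ms)"
proof -
  define q where "q = length xs"
  have q_pos: "1 \<le> q" using xs(2) by (simp add: q_def Suc_le_eq)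
  have xs_nth: "xs ! j < K \<and> xs ! j < N \<and> H \<le> L ! (xs ! j)" if "j < q" for j
    using xs(4)[of "xs ! j"] that by (simp add: q_def)
  have "last xs < N" using xs(2,4) by simp
  with S(1,2,4) obtain Y where Y: "Y 0 = last xs" "Y (Suc (card S)) = N"
      "\<And>l. l \<le> card S \<Longrightarrow> Y l < Y (Suc l) \<and> Y (Suc l) \<le> Y l + H"
      "\<And>l. 0 < l \<Longrightarrow> l \<le> card S \<Longrightarrow> Y l \<in> S"
    by (rule window_cover_staircase) blast
  interpret staircase N K H q "\<lambda>j. xs ! j" Y
  proof
    show "\<And>j. j < q - 1 \<Longrightarrow> xs ! j < xs ! Suc j"
      using xs(1) by (simp add: q_def sorted_wrt_nth_less)
    fix j assume "j < q - 1"
    then have "xs ! Suc j < K" using xs_nth[of "Suc j"] by simp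
    then show "xs ! Suc j \<le> xs ! j + K" by simp
  qed (use q_pos xs(2,3) Y S(3) in \<open>simp_all add: q_def last_conv_nth\<close>)
  have "K \<le> L ! Y l" if "0 < l" "l < q" for l
  proof -
    have "l \<le> card S" using S(3) that by (simp add: q_def)
    then show ?thesis using Y(4)[of l] S(5) that by simp
  qed
  then obtain ms where "list_all2 (\<le>) ms (map (\<lambda>t. L ! t) [0..<N])" "antipodal N (blocks ms)"
    using antipodal_blocks_below[of "\<lambda>t. L ! t"] xs_nth by blast
  moreover have "map (\<lambda>t. L ! t) [0..<N] = L" using len by (metis map_nth)
  ultimately show ?thesis by auto
qed

lemma antipodal_blocks_from_cluster:
  fixes L xs :: "nat list" and N K H :: nat
  assumes len: "length L = N"
    and xs: "sorted_wrt (<) xs" "xs \<noteq> []" "xs ! 0 = 0"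
      "\<And>x. x \<in> set xs \<Longrightarrow> x < K \<and> x < N \<and> H \<le> L ! x"
    and dense: "cyclic_dense {t. t < N \<and> K \<le> L ! t} N H"
    and many: "K + length xs \<le> card {t. t < N \<and> K \<le> L ! t}"
    and long: "2 * N < length xs * H"
  shows "\<exists>ms. list_all2 (\<le>) ms L \<and> antipodal N (blocks ms)"
proof -
  define x where "x = last xs"
  define G where "G = {t. t < N \<and> K \<le> L ! t}"
  have x: "x < K" "x < N" using xs(2,4) by (simp_all add: x_def)
  have cover: "window_cover (G \<inter> {x<..<N}) x N H"
    using window_cover_cyclic_dense dense by (simp add: G_def)
  have many': "length xs - 1 \<le> card (G \<inter> {x<..<N})"
  proof -
    have "G \<subseteq> {..x} \<union> (G \<inter> {x<..<N})" by (auto simp: G_def)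
    then have "card G \<le> card {..x} + card (G \<inter> {x<..<N})"
      by (metis card_Un_le card_mono finite_Un finite_atMost finite_Int finite_greaterThanLessThan
          order_trans)
    then show ?thesis using many x by (simp add: G_def)
  qed
  have long': "2 * (N - x) < Suc (length xs - 1) * H"
    using long xs(2) by (simp add: Suc_diff_le Suc_le_eq)
  have "G \<inter> {x<..<N} \<subseteq> {..<N}" by auto
  from this cover long' many' obtain S
    where S: "S \<subseteq> G \<inter> {x<..<N}" "card S = length xs - 1" "window_cover S x N H"
    by (rule window_cover_subset_card)
  have "finite S" using S(1) by (meson finite_Int finite_greaterThanLessThan finite_subset)
  then show ?thesis
    using antipodal_blocks_from_staircases[OF len xs] S by (auto simp: x_def G_def)
qed

lemma antipodal_blocks_large_entry:
  assumes "t < length L" "length L \<le> L ! t"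
  shows "\<exists>ms. list_all2 (\<le>) ms (rotate t L) \<and> antipodal (length L) (blocks ms)"
proof -
  define N where "N = length L"
  interpret staircase N 0 N 1 "\<lambda>_. 0" "\<lambda>l. if l = 0 then 0 else N"
    using assms(1) by unfold_locales (auto simp: N_def)
  have "map (\<lambda>s. rotate t L ! s) [0..<N] = rotate t L" by (metis N_def length_rotate map_nth)
  moreover have "L \<noteq> []" using assms(1) by auto
  then have "N \<le> rotate t L ! 0" using assms nth_rotate[of 0 L t] by (simp add: N_def)
  ultimately show ?thesis
    using antipodal_blocks_below[of "\<lambda>s. rotate t L ! s"] by (simp add: N_def)
qed

lemma antipodal_blocks_rotated_cluster:
  fixes L :: "nat list" and X :: "nat set" and N K H :: nat
  assumes len: "length L = N"
    and X: "finite X" "X \<noteq> {}" "X \<subseteq> {..<N}" "\<And>x y. x \<in> X \<Longrightarrow> y \<in> X \<Longrightarrow> y < x + K"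
      "\<And>x. x \<in> X \<Longrightarrow> H \<le> L ! x"
    and dense: "cyclic_dense {t. t < N \<and> K \<le> L ! t} N H"
    and many: "K + card X \<le> card {t. t < N \<and> K \<le> L ! t}"
    and long: "2 * N < card X * H"
  shows "\<exists>r ms. list_all2 (\<le>) ms (rotate r L) \<and> antipodal N (blocks ms)"
proof -
  define x0 where "x0 = Min X"
  have x0: "x0 \<in> X" "\<And>x. x \<in> X \<Longrightarrow> x0 \<le> x" using X(1,2) by (simp_all add: x0_def)
  define xs where "xs = sorted_list_of_set ((\<lambda>x. x - x0) ` X)"
  have inj: "inj_on (\<lambda>x. x - x0) X"
    by (rule inj_onI) (metis x0(2) le_add_diff_inverse)
  have set_xs: "set xs = (\<lambda>x. x - x0) ` X" and sorted: "sorted_wrt (<) xs"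
    using X(1) by (simp_all add: xs_def)
  have len_xs: "length xs = card X" using X(1) inj by (simp add: xs_def card_image)
  have "xs \<noteq> []" using x0(1) set_xs by auto
  moreover have "xs ! 0 = 0"
  proof -
    have "0 \<in> set xs" using x0(1) set_xs by force
    then obtain i where "i < length xs" "xs ! i = 0" by (auto simp: in_set_conv_nth)
    then show ?thesis using sorted_wrt_nth_less[OF sorted, of 0 i] by (cases i) auto
  qed
  moreover have "s < K \<and> s < N \<and> H \<le> rotate x0 L ! s" if s: "s \<in> set xs" for s
  proof -
    obtain x where x: "x \<in> X" "s = x - x0" using s set_xs by auto
    moreover have "x0 \<le> x" "x < x0 + K" "x < N" using X(3,4) x0 x(1) by auto
    ultimately have "s < K" "s < N" "rotate x0 L ! s = L ! x" using len by (auto simp: nth_rotate)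
    then show ?thesis using X(5) x(1) by simp
  qed
  ultimately have "\<exists>ms. list_all2 (\<le>) ms (rotate x0 L) \<and> antipodal N (blocks ms)"
    using antipodal_blocks_from_cluster[of "rotate x0 L" N xs K H] sorted many long len len_xs
      cyclic_dense_rotate[OF len dense] card_nth_rotate[where P = "\<lambda>v. K \<le> v" and r = x0 and L = L]
    by simp
  then show ?thesis by blast
qed

lemma sum_le_thresholds:
  fixes f :: "nat \<Rightarrow> nat"
  assumes "finite A" "K \<le> H" "\<And>t. t \<in> A \<Longrightarrow> f t \<le> M"
  shows "sum f A \<le> (card A - card {t\<in>A. K \<le> f t}) * (K - 1)
    + card {t\<in>A. K \<le> f t} * (H - 1) + card {t\<in>A. H \<le> f t} * M"
proof -
  define G where "G = {t\<in>A. K \<le> f t}"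
  define E where "E = {t\<in>A. H \<le> f t}"
  have GA: "G \<subseteq> A" and EG: "E \<subseteq> G" using assms(2) by (auto simp: G_def E_def)
  have fin: "finite G" "finite E" using assms(1) by (simp_all add: G_def E_def)
  have "sum f A = sum f (A - G) + sum f (G - E) + sum f E"
    using sum.subset_diff[OF GA assms(1), of f] sum.subset_diff[OF EG fin(1), of f] by simp
  also have "sum f (A - G) \<le> card (A - G) * (K - 1)"
    using sum_bounded_above[of "A - G" f "K - 1"] by (force simp: G_def)
  also have "sum f (G - E) \<le> card (G - E) * (H - 1)"
    using sum_bounded_above[of "G - E" f "H - 1"] by (force simp: G_def E_def)
  also have "sum f E \<le> card E * M"
    using sum_bounded_above[of E f M] assms(3) by (force simp: E_def)
  also have "card (G - E) \<le> card G" using fin by (simp add: card_mono)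
  finally show ?thesis
    using card_Diff_subset[OF finite_subset[OF GA assms(1)] GA]
    by (simp add: G_def E_def add_mono mult_right_mono)
qed

lemma four_mult_diff_le_square:
  fixes a N :: nat assumes "a \<le> N" shows "4 * ((N - a) * a) \<le> N * N"
proof -
  obtain b where b: "N = a + b" using assms le_Suc_ex by blast
  have "int (4 * ((N - a) * a)) \<le> int (N * N)"
    using zero_le_square[of "int a - int b"] b by (simp add: algebra_simps power2_eq_square)
  then show ?thesis by (simp only: of_nat_le_iff)
qed

text \<open>The source of the main term \<open>N\<^sup>2/4\<close>: \<open>g\<close> gaps in \<open>[K, H)\<close> cost \<open>g (H - K)\<close> beyond
  \<open>N (K - 1)\<close>, and \<open>g + H \<le> N + 1\<close> bounds this by \<open>(N - (H - 1)) (H - 1) \<le> N\<^sup>2/4\<close>.\<close>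
lemma threshold_sum_bound:
  fixes N g K H :: nat
  assumes "g \<le> N" "K \<le> H" "1 \<le> K" "H = K \<or> (H \<le> N \<and> g + H \<le> N + 1)"
  shows "4 * ((N - g) * (K - 1) + g * (H - 1)) \<le> 4 * N * (K - 1) + N * N"
proof -
  obtain e where e: "H = K + e" using assms(2) le_Suc_ex by blast
  obtain m where m: "N = g + m" using assms(1) le_Suc_ex by blast
  obtain k where k: "K = Suc k" using assms(3) by (cases K) auto
  have eq: "(N - g) * (K - 1) + g * (H - 1) = N * (K - 1) + g * e"
    using e m k by (simp add: algebra_simps)
  show ?thesis
  proof (cases "e = 0")
    case False
    then have H: "H \<le> N" "g \<le> N - (H - 1)" using assms(3,4) e by auto
    have "g * e \<le> (N - (H - 1)) * (H - 1)"
      using H(2) e assms(3) by (intro mult_mono) auto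
    moreover have "4 * ((N - (H - 1)) * (H - 1)) \<le> N * N"
      using H(1) by (intro four_mult_diff_le_square) simp
    ultimately have "4 * (g * e) \<le> N * N" by linarith
    then show ?thesis using eq by simp
  qed (use eq in simp)
qed

lemma window_pigeonhole:
  fixes E :: "nat set" and N K q :: nat
  assumes "E \<subseteq> {..<N}" "0 < K" "(q - 1) * ((N + K - 1) div K) < card E"
  obtains c where "q \<le> card {t\<in>E. c * K \<le> t \<and> t < c * K + K}"
proof -
  define w where "w = (N + K - 1) div K"
  have NwK: "N \<le> w * K"
    using div_mult_mod_eq[of "N + K - 1" K] mod_less_divisor[OF assms(2), of "N + K - 1"]
    unfolding w_def by linarith
  then have "(\<lambda>t. t div K) \<in> E \<rightarrow> {..<w}"
    using assms(1) by (auto simp: less_mult_imp_div_less order_less_le_trans)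
  moreover have "w \<noteq> 0"
  proof
    assume "w = 0"
    then have "E = {}" using NwK assms(1) by auto
    then show False using assms(3) by simp
  qed
  moreover have "finite E" using assms(1) finite_subset by blast
  ultimately obtain c where "card E \<le> card ((\<lambda>t. t div K) -` {c} \<inter> E) * w"
    using pigeonhole_card[of "\<lambda>t. t div K" E "{..<w}"] by auto
  with assms(3) have "q - 1 < card ((\<lambda>t. t div K) -` {c} \<inter> E)"
    by (metis mult.commute mult_less_cancel1 less_le_trans w_def)
  moreover have "(\<lambda>t. t div K) -` {c} \<inter> E = {t\<in>E. c * K \<le> t \<and> t < c * K + K}"
  proof -
    have "t div K = c \<longleftrightarrow> c * K \<le> t \<and> t < c * K + K" for t
      using assms(2) by (metis add.commute div_nat_eqI div_times_less_eq_dividend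
          dividend_less_div_times mult.commute mult_Suc)
    then show ?thesis by auto
  qed
  ultimately show thesis by (intro that[of c]) simp
qed

text \<open>With \<open>q = \<lfloor>2 N / K\<rfloor> + 1\<close>, more than \<open>(q - 1) \<lceil>N / K\<rceil> + K + q - 1\<close> heavy
  positions force \<open>q\<close> of them into one window of length \<open>K\<close> and leave \<open>K\<close> to spare.\<close>
definition cluster_threshold :: "nat \<Rightarrow> nat \<Rightarrow> nat" where
  "cluster_threshold N K = (2 * N div K) * ((N + K - 1) div K) + K + 2 * N div K + 1"

lemma sum_list_le_heavy_entries:
  assumes len: "length L = N" and small: "\<And>t. t < N \<Longrightarrow> L ! t \<le> N"
    and K: "1 \<le> K" "K \<le> H" and G: "G = {t. t < N \<and> K \<le> L ! t}"
    and alt: "H = K \<or> (H \<le> N \<and> card G + H \<le> N + 1)"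
  shows "4 * sum_list L \<le> 4 * N * (K - 1) + N * N + 4 * (card {t. t < N \<and> H \<le> L ! t} * N)"
proof -
  have "sum_list L = (\<Sum>t<N. L ! t)"
    using len by (simp add: sum_list_sum_nth atLeast0LessThan)
  also have "\<dots> \<le> (N - card G) * (K - 1) + card G * (H - 1) + card {t. t < N \<and> H \<le> L ! t} * N"
  proof -
    have "\<And>P. {t \<in> {..<N}. P t} = {t. t < N \<and> P t}" by auto
    then show ?thesis
      using sum_le_thresholds[of "{..<N}" K H "\<lambda>t. L ! t" N] K(2) small
      by (simp only: G card_lessThan) simp
  qed
  finally have "4 * sum_list L \<le> 4 * ((N - card G) * (K - 1) + card G * (H - 1))
      + 4 * (card {t. t < N \<and> H \<le> L ! t} * N)" by simp
  moreover have "card G \<le> N" using card_mono[of "{..<N}" G] by (simp add: G subset_eq)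
  ultimately show ?thesis using threshold_sum_bound[of "card G" N K H] K alt by linarith
qed

lemma heavy_density_scale:
  assumes len: "length L = N" and K: "1 \<le> K" and small: "\<And>t. t < N \<Longrightarrow> L ! t \<le> N"
    and heavy: "4 * N * (K - 1) + N * N + 4 * cluster_threshold N K * N < 4 * sum_list L"
  obtains H where "K \<le> H" "cyclic_dense {t. t < N \<and> K \<le> L ! t} N H"
    "cluster_threshold N K < card {t. t < N \<and> H \<le> L ! t}"
proof -
  define G where "G = {t. t < N \<and> K \<le> L ! t}"
  have "G \<noteq> {}"
  proof
    assume "G = {}"
    then have "4 * sum_list L \<le> 4 * N * (K - 1) + N * N + 4 * (0 * N)"
      using sum_list_le_heavy_entries[OF len small K order_refl G_def]
      unfolding G_def[symmetric] by simp
    then show False using heavy by simp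
  qed
  then obtain H where H: "K \<le> H" "cyclic_dense G N H" "H = K \<or> (H \<le> N \<and> card G + H \<le> N + 1)"
    using cyclic_dense_least_scale[of G N K] K by (auto simp: G_def)
  then have "4 * sum_list L \<le> 4 * N * (K - 1) + N * N + 4 * (card {t. t < N \<and> H \<le> L ! t} * N)"
    using sum_list_le_heavy_entries[OF len small K H(1) G_def] by blast
  with heavy have "cluster_threshold N K * N < card {t. t < N \<and> H \<le> L ! t} * N" by linarith
  then show thesis using that H(1,2) by (simp add: G_def)
qed

lemma antipodal_blocks_of_heavy_cycle:
  assumes len: "length L = N" and K: "1 \<le> K"
    and heavy: "4 * N * (K - 1) + N * N + 4 * cluster_threshold N K * N < 4 * sum_list L"
  shows "\<exists>r ms. list_all2 (\<le>) ms (rotate r L) \<and> antipodal N (blocks ms)"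
proof (cases "\<exists>t<N. N \<le> L ! t")
  case True
  then show ?thesis using antipodal_blocks_large_entry len by blast
next
  case False
  then have small: "\<And>t. t < N \<Longrightarrow> L ! t \<le> N" by (meson nat_le_linear)
  obtain H where H: "K \<le> H" "cyclic_dense {t. t < N \<and> K \<le> L ! t} N H"
    and E: "cluster_threshold N K < card {t. t < N \<and> H \<le> L ! t}"
    using heavy_density_scale[OF len K small heavy] by blast
  define E where "E = {t. t < N \<and> H \<le> L ! t}"
  define q where "q = 2 * N div K + 1"
  have E_big: "(q - 1) * ((N + K - 1) div K) + K + q \<le> card E"
    using E by (simp add: cluster_threshold_def q_def E_def)
  obtain c where "q \<le> card {t\<in>E. c * K \<le> t \<and> t < c * K + K}"
    using window_pigeonhole[of E N K q] E_big K by (auto simp: E_def)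
  then obtain X where X: "X \<subseteq> {t\<in>E. c * K \<le> t \<and> t < c * K + K}" "card X = q"
    by (meson obtain_subset_with_card_n)
  have "finite X" "X \<noteq> {}" using X(2) by (auto simp: q_def intro: card_ge_0_finite)
  moreover have "X \<subseteq> {..<N}" "\<And>x. x \<in> X \<Longrightarrow> H \<le> L ! x" using X(1) by (auto simp: E_def)
  moreover have "y < x + K" if "x \<in> X" "y \<in> X" for x y
  proof -
    have "c * K \<le> x" "y < c * K + K" using X(1) that by auto
    then show ?thesis by simp
  qed
  moreover have "K + card X \<le> card {t. t < N \<and> K \<le> L ! t}"
  proof -
    have "E \<subseteq> {t. t < N \<and> K \<le> L ! t}" using H(1) by (auto simp: E_def)
    then have "card E \<le> card {t. t < N \<and> K \<le> L ! t}" by (intro card_mono) simp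
    then show ?thesis using E_big X(2) by linarith
  qed
  moreover have "2 * N < card X * H"
  proof -
    have "2 * N div K * K + 2 * N mod K = 2 * N" by (rule div_mult_mod_eq)
    moreover have "2 * N mod K < K" using K by simp
    moreover have "q * K = 2 * N div K * K + K" by (simp add: q_def)
    ultimately have "2 * N < q * K" by linarith
    then show ?thesis using H(1) X(2) by (meson less_le_trans mult_le_mono2)
  qed
  ultimately show ?thesis using antipodal_blocks_rotated_cluster[OF len] H(2) by blast
qed

lemma antipodal_subseq_of_heavy_word:
  fixes w :: "bool list" and N K :: nat
  assumes trues: "length (filter id w) = N" and N: "1 \<le> N" and K: "1 \<le> K"
    and heavy: "4 * N * (K - 1) + N * N + 4 * cluster_threshold N K * N < 4 * length (filter Not w)"
  obtains ys where "subseq ys w" "antipodal N ys"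
proof -
  obtain ls r where w: "w = blocks ls @ replicate r False" by (rule blocks_decomposition)
  have "length ls = N" using trues w by (simp add: length_filter_blocks)
  then obtain l ls0 where ls: "ls = l # ls0" using N by (cases ls) auto
  text \<open>Moving the trailing \<open>False\<close>s to the front makes the word a cyclic rotation of
    a block word; rotations are undone by \<open>antipodal_subseq_swap\<close>.\<close>
  define ls' where "ls' = (l + r) # ls0"
  have ls': "length ls' = N" "sum_list ls' = length (filter Not w)"
    using \<open>length ls = N\<close> w ls by (simp_all add: ls'_def length_filter_blocks)
  obtain j ms where ms: "list_all2 (\<le>) ms (rotate j ls')" "antipodal N (blocks ms)"
    using antipodal_blocks_of_heavy_cycle[OF ls'(1) K] heavy ls'(2) by auto
  define i where "i = j mod N"
  have "rotate j ls' = drop i ls' @ take i ls'"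
    using rotate_drop_take[of j ls'] ls'(1) by (simp add: i_def)
  then have "subseq (blocks ms) (blocks (drop i ls') @ blocks (take i ls'))"
    using subseq_blocks[OF ms(1)] by simp
  then obtain ys1 where "subseq ys1 (blocks (take i ls') @ blocks (drop i ls'))" "antipodal N ys1"
    using ms(2) by (rule antipodal_subseq_swap)
  moreover have "blocks (take i ls') @ blocks (drop i ls') = replicate r False @ blocks ls"
    by (simp add: ls ls'_def replicate_add[symmetric] add.commute flip: blocks_append)
  ultimately obtain ys where "subseq ys (blocks ls @ replicate r False)" "antipodal N ys"
    by (metis antipodal_subseq_swap)
  then show thesis using that w by blast
qed

section \<open>Book embeddings of complete bipartite graphs\<close>

lemma book_embedding_twist_pages:
  assumes emb: "is_book_embedding V E k spine page"
    and zs: "sorted_wrt (\<lambda>u v. spine u < spine v) zs" "length zs = 2 * N"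
    and edges: "\<And>i. i < N \<Longrightarrow> {zs ! i, zs ! (i + N)} \<in> E"
  shows "N \<le> k"
proof (rule ccontr)
  assume "\<not> N \<le> k"
  define pg where "pg i = page {zs ! i, zs ! (i + N)}" for i
  have "pg ` {..<N} \<subseteq> {..<k}" using emb edges by (auto simp: is_book_embedding_def pg_def)
  then have "card (pg ` {..<N}) < card {..<N}"
    using \<open>\<not> N \<le> k\<close> card_mono[of "{..<k}" "pg ` {..<N}"] by simp
  then obtain a b where ab: "a < b" "b < N" "pg a = pg b"
    by (metis (no_types, lifting) inj_on_def card_image lessThan_iff less_irrefl linorder_neqE_nat)
  have "interleave spine (zs ! a) (zs ! (a + N)) (zs ! b) (zs ! (b + N))"
    unfolding interleave_def using ab zs
    by (auto intro!: sorted_wrt_nth_less[OF zs(1)])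
  then show False
    using emb edges[of a] edges[of b] ab unfolding is_book_embedding_def pg_def by auto
qed

lemma spine_order:
  fixes spine :: "'a \<Rightarrow> nat"
  assumes "finite V" "inj_on spine V"
  obtains vs where "set vs = V" "distinct vs" "sorted_wrt (\<lambda>u v. spine u < spine v) vs"
proof -
  interpret folding_insort_key "(\<le>)" "(<)" V spine by unfold_locales (fact assms(2))
  obtain l where "sorted_wrt (<) (map spine l)" "set l = V" "length l = card V"
    using finite_set_strict_sorted[OF order_refl assms(1)] by blast
  then show thesis using that by (simp add: sorted_wrt_map card_distinct)
qed

lemma Kbip_edgeI:
  "u \<in> Kbip_V N n \<Longrightarrow> v \<in> Kbip_V N n \<Longrightarrow> isl u \<noteq> isl v \<Longrightarrow> {u, v} \<in> Kbip_E N n"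
  by (auto simp: Kbip_V_def Kbip_E_def insert_commute)

lemma length_filter_isl_Kbip:
  assumes "set vs = Kbip_V N n" "distinct vs"
  shows "length (filter isl vs) = N" "length (filter (\<lambda>v. \<not> isl v) vs) = n"
proof -
  have "{v. isl v} \<inter> Kbip_V N n = Inl ` {..<N}" "{v. \<not> isl v} \<inter> Kbip_V N n = Inr ` {..<n}"
    by (auto simp: Kbip_V_def)
  then show "length (filter isl vs) = N" "length (filter (\<lambda>v. \<not> isl v) vs) = n"
    using distinct_length_filter[OF assms(2)] assms(1) by (simp_all add: card_image)
qed

lemma Kbip_not_book_embeddable:
  fixes N n K :: nat
  assumes N: "1 \<le> N" and K: "1 \<le> K"
    and heavy: "4 * N * (K - 1) + N * N + 4 * cluster_threshold N K * N < 4 * n"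
  shows "\<not> k_page_embeddable (Kbip_V N n) (Kbip_E N n) (N - 1)"
proof
  assume "k_page_embeddable (Kbip_V N n) (Kbip_E N n) (N - 1)"
  then obtain spine page where emb: "is_book_embedding (Kbip_V N n) (Kbip_E N n) (N - 1) spine page"
    unfolding k_page_embeddable_def by blast
  have "finite (Kbip_V N n)" "inj_on spine (Kbip_V N n)"
    using emb by (simp_all add: Kbip_V_def is_book_embedding_def)
  then obtain vs
    where vs: "set vs = Kbip_V N n" "distinct vs" "sorted_wrt (\<lambda>u v. spine u < spine v) vs"
    by (rule spine_order)
  obtain ys where "subseq ys (map isl vs)" "antipodal N ys"
    using antipodal_subseq_of_heavy_word[of "map isl vs" N K] length_filter_isl_Kbip[OF vs(1,2)]
      N K heavy by (auto simp: filter_map comp_def)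
  then obtain zs where zs: "subseq zs vs" "antipodal N (map isl zs)"
    by (auto elim: subseq_map_obtain)
  have len: "length zs = 2 * N" using zs(2) by (simp add: antipodal_def)
  have opp: "isl (zs ! i) \<noteq> isl (zs ! (i + N))" if "i < N" for i
  proof -
    have "map isl zs ! i \<noteq> map isl zs ! (i + N)" using zs(2) that unfolding antipodal_def by blast
    then show ?thesis using len that by simp
  qed
  have "set zs \<subseteq> Kbip_V N n" using zs(1) vs(1) by (metis subseq_conv_nths set_nths_subset)
  then have "zs ! i \<in> Kbip_V N n" if "i < 2 * N" for i
    using nth_mem[of i zs] len that by auto
  then have "{zs ! i, zs ! (i + N)} \<in> Kbip_E N n" if "i < N" for i
    using opp[OF that] that by (intro Kbip_edgeI) simp_all
  then have "N \<le> N - 1"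
    using book_embedding_twist_pages[OF emb sorted_wrt_subseq[OF zs(1) vs(3)] len] by blast
  with N show False by simp
qed

section \<open>The bound for \<open>k\<close> pages\<close>

lemma ceiling_cube_bounds:
  fixes r :: real assumes "1 \<le> r"
  shows "r ^ 3 \<le> real ((nat \<lceil>r\<rceil>) ^ 3)" "real ((nat \<lceil>r\<rceil>) ^ 3) \<le> 8 * r ^ 3"
proof -
  have "r \<le> real (nat \<lceil>r\<rceil>)" by (rule real_nat_ceiling_ge)
  moreover have "real (nat \<lceil>r\<rceil>) \<le> 2 * r"
  proof -
    have "real_of_int \<lceil>r\<rceil> \<le> r + 1" by (rule of_int_ceiling_le_add_one)
    moreover have "real (nat \<lceil>r\<rceil>) = real_of_int \<lceil>r\<rceil>" using assms by simp
    ultimately show ?thesis using assms by linarith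
  qed
  ultimately show "r ^ 3 \<le> real ((nat \<lceil>r\<rceil>) ^ 3)" "real ((nat \<lceil>r\<rceil>) ^ 3) \<le> 8 * r ^ 3"
    using power_mono[of r _ 3] power_mono[of _ "2 * r" 3] assms
    by (simp_all add: power_mult_distrib)
qed

lemma cluster_threshold_le:
  fixes r :: real and N K :: nat
  assumes r: "1 \<le> r" and N: "real N = r ^ 4 + 1" and K: "r ^ 3 \<le> real K" "real K \<le> 8 * r ^ 3"
  shows "real (cluster_threshold N K) \<le> 25 * r ^ 3"
proof -
  have r3: "1 \<le> r ^ 3" "r \<le> r ^ 3" "r ^ 2 \<le> r ^ 3"
    using r power_increasing[of 1 3 r] power_increasing[of 2 3 r] by simp_all
  have "real N / real K \<le> (r ^ 4 + 1) / r ^ 3"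
    using N K r3 r by (intro frac_le) auto
  also have "\<dots> \<le> r + 1" using r3 r by (simp add: field_simps power_eq_if)
  finally have NK: "real N / real K \<le> r + 1" .
  have "real (2 * N div K) \<le> 2 * (real N / real K)"
    using of_nat_div_le_of_nat[where 'a = real, of "2 * N" K] by simp
  then have d1: "real (2 * N div K) \<le> 4 * r" using NK r by linarith
  have d2: "real ((N + K - 1) div K) \<le> 3 * r"
  proof -
    have "real ((N + K - 1) div K) \<le> real (N + K) / real K"
      using of_nat_div_le_of_nat[where 'a = real, of "N + K - 1" K]
      by (rule order_trans) (simp add: divide_right_mono)
    also have "\<dots> = real N / real K + 1" using K r3 by (simp add: field_simps)
    finally show ?thesis using NK r by simp
  qed
  have "real (cluster_threshold N K)
      = real (2 * N div K) * real ((N + K - 1) div K) + real K + real (2 * N div K) + 1"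
    by (simp add: cluster_threshold_def)
  also have "\<dots> \<le> (4 * r) * (3 * r) + 8 * r ^ 3 + 4 * r + 1"
    using d1 d2 K r by (intro add_mono mult_mono) auto
  also have "\<dots> \<le> 25 * r ^ 3" using r3 by (simp add: power2_eq_square)
  finally show ?thesis .
qed

lemma fourth_root_cube_threshold:
  fixes k :: nat
  assumes "1 \<le> k"
  defines "K \<equiv> (nat \<lceil>real k powr (1 / 4)\<rceil>) ^ 3"
  shows "1 \<le> K"
    and "4 * (k + 1) * (K - 1) + (k + 1) * (k + 1) + 4 * cluster_threshold (k + 1) K * (k + 1)
      < 4 * nat \<lceil>(real k)\<^sup>2 / 4 + 500 * real k powr (7 / 4)\<rceil>" (is "?lhs < 4 * nat \<lceil>?b\<rceil>")
proof -
  define r where "r = real k powr (1 / 4)"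
  have r: "1 \<le> r" using assms(1) by (simp add: r_def ge_one_powr_ge_zero)
  have pow: "r ^ n = real k powr (real n / 4)" for n
  proof -
    have "r ^ n = r powr real n" using r by (simp add: powr_realpow)
    also have "\<dots> = real k powr (real n / 4)" by (simp add: r_def powr_powr)
    finally show ?thesis .
  qed
  have rK: "r ^ 3 \<le> real K" "real K \<le> 8 * r ^ 3"
    using ceiling_cube_bounds[OF r] by (simp_all add: K_def r_def)
  have r3: "1 \<le> r ^ 3" "r ^ 3 \<le> r ^ 7" "r ^ 4 \<le> r ^ 7" "1 \<le> r ^ 7"
    using r power_increasing[of 3 7 r] power_increasing[of 4 7 r] by simp_all
  show "1 \<le> K" using rK r3 by linarith
  have rk: "r ^ 4 = real k" using pow[of 4] assms(1) by simp
  then have N: "real (k + 1) = r ^ 4 + 1" by simp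
  have "real ?lhs
      \<le> 4 * (r ^ 4 + 1) * (8 * r ^ 3) + (r ^ 4 + 1) * (r ^ 4 + 1) + 4 * (25 * r ^ 3) * (r ^ 4 + 1)"
    unfolding of_nat_add of_nat_mult N using \<open>1 \<le> K\<close> rK cluster_threshold_le[OF r N rK] r
    by (intro add_mono mult_mono) (auto simp: rk)
  also have "\<dots> = r ^ 8 + 132 * r ^ 7 + 2 * r ^ 4 + 132 * r ^ 3 + 1"
    by (simp add: algebra_simps power_add[symmetric])
  also have "\<dots> < r ^ 8 + 2000 * r ^ 7" using r3 by linarith
  also have "\<dots> = 4 * ?b"
    using pow[of 8] pow[of 7] assms(1) by (simp add: powr_realpow)
  also have "\<dots> \<le> 4 * real (nat \<lceil>?b\<rceil>)"
    by (intro mult_left_mono real_nat_ceiling_ge) simp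
  finally show "?lhs < 4 * nat \<lceil>?b\<rceil>" by linarith
qed

theorem proposition15:
  fixes k :: nat
  assumes "k \<ge> 1"
  shows "\<not> k_page_embeddable
            (Kbip_V (k + 1) (nat \<lceil>(real k)\<^sup>2 / 4 + 500 * real k powr (7 / 4)\<rceil>))
            (Kbip_E (k + 1) (nat \<lceil>(real k)\<^sup>2 / 4 + 500 * real k powr (7 / 4)\<rceil>)) k"
  using Kbip_not_book_embeddable[of "k + 1" "(nat \<lceil>real k powr (1 / 4)\<rceil>) ^ 3"]
    fourth_root_cube_threshold[OF assms]
  by simp

end
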